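(* Let $p$ be a prime and let $\varphi\in\mathbb{Z}[x]$ with $\varphi\not\equiv 0\bmod p$. Let $l,m$ be nonnegative integers and let $I=\langle p^l,\varphi^m\rangle$ be the ideal of $\mathbb{Z}[x]$. Then (1) $I:\langle p^i\rangle=\langle p^{l-i},\varphi^m\rangle$ for every $i\le l$, and (2) $I:\langle\varphi^j\rangle=\langle p^l,\varphi^{m-j}\rangle$ for every $j\le m$.
   Context: For ideals $I,J$ of a commutative ring $S$, the quotient ideal is $I:J=\{a\in S\mid aJ\subseteq I\}$. *)

theory Defs
  imports "HOL-Computational_Algebra.Polynomial" "HOL-Computational_Algebra.Primes"
begin

definition principal_ideal :: "'a::comm_ring_1 \<Rightarrow> 'a set" where
  "principal_ideal a = {r * a | r. True}"

definition ideal2 :: "'a::comm_ring_1 \<Rightarrow> 'a \<Rightarrow> 'a set" where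
  "ideal2 a b = {r * a + s * b | r s. True}"

definition quotient_ideal :: "'a::comm_ring_1 set \<Rightarrow> 'a set \<Rightarrow> 'a set" where
  "quotient_ideal I J = {a. \<forall>b\<in>J. a * b \<in> I}"

end

theory Submission
  imports Defs "HOL-Computational_Algebra.Polynomial_Factorial"
begin

text \<open>Since \<open>p\<close> is prime in \<open>\<int>[x]\<close> and does not divide \<open>\<phi>\<close>, the elements \<open>p\<close> and \<open>\<phi>\<close> are coprime.
  For coprime \<open>g\<close> and \<open>b\<close>, if \<open>a g = r g c + s b\<close> then \<open>g\<close> divides \<open>s b\<close>, hence \<open>s\<close>; cancelling
  \<open>g\<close> gives \<open>a \<in> \<langle>c, b\<rangle>\<close>. Thus \<open>\<langle>g c, b\<rangle> : \<langle>g\<rangle> = \<langle>c, b\<rangle>\<close>, and both claims are the case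
  \<open>g = p\<^sup>i\<close> resp. \<open>g = \<phi>\<^sup>j\<close>.\<close>

lemma ideal2_commute: "ideal2 a b = ideal2 b a"
  unfolding ideal2_def by (metis add.commute)

lemma quotient_ideal_ideal2_mult_principal:
  fixes g b c :: "'a :: {idom, semiring_gcd}"
  assumes "g \<noteq> 0" and "coprime g b"
  shows "quotient_ideal (ideal2 (g * c) b) (principal_ideal g) = ideal2 c b"
proof (intro equalityI subsetI)
  fix a assume "a \<in> quotient_ideal (ideal2 (g * c) b) (principal_ideal g)"
  then have "a * g \<in> ideal2 (g * c) b"
    unfolding quotient_ideal_def principal_ideal_def by force
  then obtain r s where rs: "a * g = r * (g * c) + s * b"
    unfolding ideal2_def by blast
  then have "s * b = g * (a - r * c)"
    by (simp add: algebra_simps)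
  then have "g dvd s * b"
    by simp
  then obtain t where "s = g * t"
    using \<open>coprime g b\<close> coprime_dvd_mult_left_iff by blast
  with rs have "g * a = g * (r * c + t * b)"
    by (simp add: algebra_simps)
  then have "a = r * c + t * b"
    using \<open>g \<noteq> 0\<close> by simp
  then show "a \<in> ideal2 c b"
    unfolding ideal2_def by blast
next
  fix a assume "a \<in> ideal2 c b"
  then obtain r s where a: "a = r * c + s * b"
    unfolding ideal2_def by blast
  have "a * (d * g) \<in> ideal2 (g * c) b" for d
  proof -
    have "a * (d * g) = (r * d) * (g * c) + (s * d * g) * b"
      using a by (simp add: algebra_simps)
    then show ?thesis
      unfolding ideal2_def by blast
  qed
  then show "a \<in> quotient_ideal (ideal2 (g * c) b) (principal_ideal g)"
    unfolding quotient_ideal_def principal_ideal_def by blast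
qed

lemma quotient_ideal_ideal2_power_principal:
  fixes x y :: "'a :: {idom, semiring_gcd}"
  assumes "x \<noteq> 0" and "coprime x y" and "i \<le> l"
  shows "quotient_ideal (ideal2 (x ^ l) (y ^ m)) (principal_ideal (x ^ i))
           = ideal2 (x ^ (l - i)) (y ^ m)"
proof -
  have "x ^ l = x ^ i * x ^ (l - i)"
    using \<open>i \<le> l\<close> by (simp flip: power_add)
  then show ?thesis
    using quotient_ideal_ideal2_mult_principal[of "x ^ i" "y ^ m" "x ^ (l - i)"] assms
    by simp
qed

theorem claim6:
  fixes p :: int and \<phi> :: "int poly" and l m :: nat
  assumes "prime p"
    and "\<not> (\<forall>k. p dvd coeff \<phi> k)"
  shows "(\<forall>i\<le>l. quotient_ideal (ideal2 ([:p:] ^ l) (\<phi> ^ m)) (principal_ideal ([:p:] ^ i))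
                 = ideal2 ([:p:] ^ (l - i)) (\<phi> ^ m))
       \<and> (\<forall>j\<le>m. quotient_ideal (ideal2 ([:p:] ^ l) (\<phi> ^ m)) (principal_ideal (\<phi> ^ j))
                 = ideal2 ([:p:] ^ l) (\<phi> ^ (m - j)))"
proof -
  have "prime_elem [:p:]"
    using \<open>prime p\<close> prime_elem_const_poly_iff by auto
  moreover have "\<not> [:p:] dvd \<phi>"
    using assms(2) const_poly_dvd_iff by blast
  ultimately have "coprime [:p:] \<phi>"
    using prime_elem_imp_coprime by blast
  moreover have "[:p:] \<noteq> 0" and "\<phi> \<noteq> 0"
    using assms by auto
  ultimately show ?thesis
    using quotient_ideal_ideal2_power_principal[of "[:p:]" \<phi>]
      quotient_ideal_ideal2_power_principal[of \<phi> "[:p:]" _ m l,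
        unfolded ideal2_commute[of "\<phi> ^ _" "[:p:] ^ l"]]
    by (simp add: coprime_commute)
qed

end
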